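(* Let $a,b\in\mathbb{R}$ with $0<a<b$, let $q\geq 1$, $s\in\left(0,\frac1q\right)$, and $\alpha,\lambda\in[0,1]$. Define $$\gamma_1(\alpha,\lambda)=(1-\alpha)\Big[\alpha\lambda-\frac{1-\alpha}{2}\Big],\qquad \gamma_2(\alpha,\lambda)=(\alpha\lambda)^2-\gamma_1(\alpha,\lambda),$$ $$c_1(\alpha,\lambda,s)=(\alpha\lambda)^{s+2}\frac{2}{(s+1)(s+2)}-\alpha\lambda\frac{(1-\alpha)^{s+1}}{s+1}+\frac{(1-\alpha)^{s+2}}{s+2},$$ $$c_2(\alpha,\lambda,s)=(1-\alpha\lambda)^{s+2}\frac{2}{(s+1)(s+2)}-\frac{(1-\alpha\lambda)(1+\alpha^{s+1})}{s+1}+\frac{1+\alpha^{s+2}}{s+2},$$ $$c_3(\alpha,\lambda,s)=\alpha\lambda\frac{(1-\alpha)^{s+1}}{s+1}-\frac{(1-\alpha)^{s+2}}{s+2},\qquad c_4(\alpha,\lambda,s)=\frac{(\alpha\lambda-1)(1-\alpha^{s+1})}{s+1}+\frac{1-\alpha^{s+2}}{s+2},$$ and set $\Delta=\left|\lambda A_\alpha(a^{s+1},b^{s+1})+(1-\lambda)A_\alpha^{s+1}(a,b)-L_{s+1}^{s+1}(a,b)\right|$. Then: (i) if $\alpha\lambda\leq 1-\alpha\leq 1-\lambda(1-\alpha)$, $$\Delta\leq (b-a)(s+1)\Big[\gamma_2^{1-\frac1q}(\alpha,\lambda)\big(c_1(\alpha,\lambda,s)b^{sq}+c_2(\alpha,\lambda,s)a^{sq}\big)^{\frac1q}+\gamma_2^{1-\frac1q}(1-\alpha,\lambda)\big(c_2(1-\alpha,\lambda,s)b^{sq}+c_1(1-\alpha,\lambda,s)a^{sq}\big)^{\frac1q}\Big];$$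 (ii) if $\alpha\lambda\leq 1-\lambda(1-\alpha)\leq 1-\alpha$, $$\Delta\leq (b-a)(s+1)\Big[\gamma_2^{1-\frac1q}(\alpha,\lambda)\big(c_1(\alpha,\lambda,s)b^{sq}+c_2(\alpha,\lambda,s)a^{sq}\big)^{\frac1q}+\gamma_1^{1-\frac1q}(1-\alpha,\lambda)\big(c_4(1-\alpha,\lambda,s)b^{sq}+c_3(1-\alpha,\lambda,s)a^{sq}\big)^{\frac1q}\Big];$$ (iii) if $1-\alpha\leq\alpha\lambda\leq 1-\lambda(1-\alpha)$, $$\Delta\leq (b-a)(s+1)\Big[\gamma_1^{1-\frac1q}(\alpha,\lambda)\big(c_3(\alpha,\lambda,s)b^{sq}+c_4(\alpha,\lambda,s)a^{sq}\big)^{\frac1q}+\gamma_2^{1-\frac1q}(1-\alpha,\lambda)\big(c_2(1-\alpha,\lambda,s)b^{sq}+c_1(1-\alpha,\lambda,s)a^{sq}\big)^{\frac1q}\Big].$$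
   Context: For real $x,y$ and $\alpha\in[0,1]$, the weighted arithmetic mean is $A_\alpha(x,y)=\alpha x+(1-\alpha)y$, and $A_\alpha^{s+1}(x,y)$ denotes $(A_\alpha(x,y))^{s+1}$. For $x,y>0$, $x\neq y$, and $p\in\mathbb{R}\setminus\{-1,0\}$, the $p$-logarithmic mean is $L_p(x,y)=\left(\frac{y^{p+1}-x^{p+1}}{(p+1)(y-x)}\right)^{1/p}$, and $L_{s+1}^{s+1}$ denotes its $(s+1)$-th power. *)

theory Defs
  imports Complex_Main
begin

definition wam :: "real \<Rightarrow> real \<Rightarrow> real \<Rightarrow> real" where
  "wam \<alpha> x y = \<alpha> * x + (1 - \<alpha>) * y"

text \<open>p-logarithmic mean (x, y > 0, x ~= y, p not in {-1, 0}).\<close>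
definition plog_mean :: "real \<Rightarrow> real \<Rightarrow> real \<Rightarrow> real" where
  "plog_mean p x y = ((y powr (p + 1) - x powr (p + 1)) / ((p + 1) * (y - x))) powr (1 / p)"

text \<open>Real power with the usual convention 0^0 = 1 (Isabelle's powr has 0 powr 0 = 0).\<close>
definition rpow :: "real \<Rightarrow> real \<Rightarrow> real" where
  "rpow x e = (if x = 0 \<and> e = 0 then 1 else x powr e)"

definition gam1 :: "real \<Rightarrow> real \<Rightarrow> real" where
  "gam1 \<alpha> l = (1 - \<alpha>) * (\<alpha> * l - (1 - \<alpha>) / 2)"

definition gam2 :: "real \<Rightarrow> real \<Rightarrow> real" where
  "gam2 \<alpha> l = (\<alpha> * l)^2 - gam1 \<alpha> l"

definition c1 :: "real \<Rightarrow> real \<Rightarrow> real \<Rightarrow> real" where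
  "c1 \<alpha> l s = (\<alpha> * l) powr (s + 2) * (2 / ((s + 1) * (s + 2)))
     - \<alpha> * l * ((1 - \<alpha>) powr (s + 1) / (s + 1)) + (1 - \<alpha>) powr (s + 2) / (s + 2)"

definition c2 :: "real \<Rightarrow> real \<Rightarrow> real \<Rightarrow> real" where
  "c2 \<alpha> l s = (1 - \<alpha> * l) powr (s + 2) * (2 / ((s + 1) * (s + 2)))
     - (1 - \<alpha> * l) * (1 + \<alpha> powr (s + 1)) / (s + 1) + (1 + \<alpha> powr (s + 2)) / (s + 2)"

definition c3 :: "real \<Rightarrow> real \<Rightarrow> real \<Rightarrow> real" where
  "c3 \<alpha> l s = \<alpha> * l * ((1 - \<alpha>) powr (s + 1) / (s + 1)) - (1 - \<alpha>) powr (s + 2) / (s + 2)"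

definition c4 :: "real \<Rightarrow> real \<Rightarrow> real \<Rightarrow> real" where
  "c4 \<alpha> l s = (\<alpha> * l - 1) * (1 - \<alpha> powr (s + 1)) / (s + 1) + (1 - \<alpha> powr (s + 2)) / (s + 2)"

end

theory Submission
  imports Defs "HOL-Analysis.Analysis"
begin

text \<open>Write \<open>f(x) = x\<^sup>s\<^sup>+\<^sup>1\<close> and \<open>x(t) = t b + (1 - t) a\<close>. Integration by parts turns the
  expression inside \<open>\<Delta>\<close> into \<open>b - a\<close> times the sum of the kernel integrals of
  \<open>(t - \<alpha>\<lambda>) f'(x(t))\<close> over \<open>[0, 1 - \<alpha>]\<close> and of \<open>(t - 1 + (1 - \<alpha>)\<lambda>) f'(x(t))\<close> over
  \<open>[1 - \<alpha>, 1]\<close>. On each interval the power-mean inequality with weight \<open>\<bar>t - c\<bar>\<close> (proved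
  from Young's inequality) bounds the integral by \<open>W\<^sup>1\<^sup>-\<^sup>1\<^sup>/\<^sup>q (\<integral> \<bar>t - c\<bar> f'(x(t))\<^sup>q)\<^sup>1\<^sup>/\<^sup>q\<close>,
  and \<open>f'(x(t))\<^sup>q \<le> (s + 1)\<^sup>q (t\<^sup>s b\<^sup>s\<^sup>q + (1 - t)\<^sup>s a\<^sup>s\<^sup>q)\<close> because \<open>y \<mapsto> y\<^sup>s\<^sup>q\<close> is
  subadditive for \<open>s q \<le> 1\<close>. What remains are the elementary moments of \<open>1\<close>, \<open>t\<^sup>s\<close> and
  \<open>(1 - t)\<^sup>s\<close> against \<open>\<bar>t - c\<bar>\<close>: whether the centre \<open>c\<close> lies inside the interval or to its
  right produces \<open>\<gamma>\<^sub>2, c\<^sub>1, c\<^sub>2\<close> or \<open>\<gamma>\<^sub>1, c\<^sub>3, c\<^sub>4\<close>, and the second interval is the mirror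
  image of the first under \<open>t \<mapsto> 1 - t\<close>, \<open>\<alpha> \<mapsto> 1 - \<alpha>\<close>, which yields the three cases.\<close>

lemma powr_add_le_add_powr:
  fixes y z r :: real
  assumes "0 \<le> y" "0 \<le> z" "0 < r" "r \<le> 1"
  shows "(y + z) powr r \<le> y powr r + z powr r"
proof (cases "y + z = 0")
  case True
  then show ?thesis using assms by simp
next
  case False
  then have yz: "0 < y + z" using assms by simp
  have frac_le: "x / (y + z) \<le> (x / (y + z)) powr r" if "0 \<le> x" "x \<le> y + z" for x
    using powr_mono'[of r 1 "x / (y + z)"] that yz assms by simp
  have "(y + z) powr r = (y + z) powr r * (y / (y + z) + z / (y + z))"
    using yz by (simp add: add_divide_distrib[symmetric])
  also have "\<dots> \<le> (y + z) powr r * ((y / (y + z)) powr r + (z / (y + z)) powr r)"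
    using frac_le[of y] frac_le[of z] assms by (intro mult_left_mono add_mono) auto
  also have "\<dots> = y powr r + z powr r"
    using yz assms by (simp add: powr_divide distrib_left)
  finally show ?thesis .
qed

lemma powr_convex_comb_le:
  fixes a b t s p :: real
  assumes "0 \<le> a" "0 \<le> b" "0 \<le> t" "t \<le> 1" "0 < s" "s \<le> p" "p \<le> 1"
  shows "(t * b + (1 - t) * a) powr p \<le> t powr s * b powr p + (1 - t) powr s * a powr p"
proof -
  have "(t * b + (1 - t) * a) powr p \<le> (t * b) powr p + ((1 - t) * a) powr p"
    using assms by (intro powr_add_le_add_powr) auto
  also have "\<dots> = t powr p * b powr p + (1 - t) powr p * a powr p"
    using assms by (simp add: powr_mult)
  also have "\<dots> \<le> t powr s * b powr p + (1 - t) powr s * a powr p"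
    using assms by (intro add_mono mult_right_mono powr_mono') auto
  finally show ?thesis .
qed

text \<open>Young's inequality with the free scale \<open>K\<close>; equality holds for \<open>K = y\<close>.\<close>
lemma le_Young_scaled:
  fixes y K q :: real
  assumes "0 < y" "0 < K" "1 \<le> q"
  shows "y \<le> (1 - 1/q) * K + (1/q) * (K powr (1 - q) * y powr q)"
proof -
  have "(K powr (1 - q) * y powr q) powr (1/q) * K powr (1 - 1/q)
        \<le> (1/q) * (K powr (1 - q) * y powr q) + (1 - 1/q) * K"
    using assms by (intro Youngs_inequality_0) (auto simp: field_simps)
  moreover have "(K powr (1 - q) * y powr q) powr (1/q) * K powr (1 - 1/q)
      = K powr ((1 - q) * (1/q) + (1 - 1/q)) * y powr (q * (1/q))"
    using assms by (simp add: powr_mult powr_powr powr_add)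
  moreover have "(1 - q) * (1/q) + (1 - 1/q) = 0" "q * (1/q) = 1"
    using assms by (simp_all add: field_simps)
  ultimately show ?thesis using assms by simp
qed

lemma weighted_power_mean_has_integral:
  fixes w g h :: "'a::euclidean_space \<Rightarrow> real"
  assumes q: "1 \<le> q" and W: "0 < W" and X: "0 < X"
    and int_w: "(w has_integral W) S"
    and int_wg: "((\<lambda>t. w t * g t) has_integral J) S"
    and int_wh: "((\<lambda>t. w t * h t) has_integral X) S"
    and w_nonneg: "\<And>t. t \<in> S \<Longrightarrow> 0 \<le> w t"
    and g_pos: "\<And>t. t \<in> S \<Longrightarrow> 0 < g t"
    and g_h: "\<And>t. t \<in> S \<Longrightarrow> g t powr q \<le> h t"
  shows "J \<le> W powr (1 - 1/q) * X powr (1/q)"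
proof -
  define K where "K = (X / W) powr (1/q)"
  have K: "0 < K" using W X by (simp add: K_def)
  have "((\<lambda>t. (1 - 1/q) * (K * w t) + (1/q) * (K powr (1 - q) * (w t * h t)))
          has_integral ((1 - 1/q) * (K * W) + (1/q) * (K powr (1 - q) * X))) S"
    by (intro has_integral_add has_integral_mult_right int_w int_wh)
  then have "J \<le> (1 - 1/q) * (K * W) + (1/q) * (K powr (1 - q) * X)"
  proof (rule has_integral_le[OF int_wg])
    fix t assume t: "t \<in> S"
    have "g t \<le> (1 - 1/q) * K + (1/q) * (K powr (1 - q) * g t powr q)"
      using le_Young_scaled[OF g_pos[OF t] K q] .
    also have "\<dots> \<le> (1 - 1/q) * K + (1/q) * (K powr (1 - q) * h t)"
      using g_h[OF t] q by (intro add_left_mono mult_left_mono) auto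
    finally have "w t * g t \<le> w t * ((1 - 1/q) * K + (1/q) * (K powr (1 - q) * h t))"
      using w_nonneg[OF t] by (rule mult_left_mono)
    then show "w t * g t \<le> (1 - 1/q) * (K * w t) + (1/q) * (K powr (1 - q) * (w t * h t))"
      by (simp add: algebra_simps)
  qed
  also have "K * W = W powr (1 - 1/q) * X powr (1/q)"
  proof -
    have "K * W = exp ((1/q) * (ln X - ln W) + ln W)"
      using W X by (simp add: K_def powr_def ln_div exp_add)
    then show ?thesis using W X by (simp add: powr_def exp_add[symmetric] algebra_simps)
  qed
  also have "K powr (1 - q) * X = W powr (1 - 1/q) * X powr (1/q)"
  proof -
    have "K powr (1 - q) * X = exp ((1 - q) * ((1/q) * (ln X - ln W)) + ln X)"
      using W X by (simp add: K_def powr_def ln_div exp_add)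
    also have "(1 - q) * ((1/q) * (ln X - ln W)) + ln X = (1 - 1/q) * ln W + (1/q) * ln X"
      using q by (simp add: field_simps)
    finally show ?thesis using W X by (simp add: powr_def exp_add)
  qed
  finally show ?thesis by (simp add: algebra_simps)
qed

lemma has_integral_reflect_one_minus:
  fixes f :: "real \<Rightarrow> 'b::real_normed_vector"
  assumes "(f has_integral I) {u..v}"
  shows "((\<lambda>t. f (1 - t)) has_integral I) {1 - v..1 - u}"
proof -
  have "((\<lambda>t. f (- t)) has_integral I) {-v..-u}"
    using assms by simp
  from has_integral_shift_real_ivl[OF this, of "-1"] show ?thesis
    by simp
qed

lemma has_integral_abs_sub_mult:
  fixes F g :: "real \<Rightarrow> real"
  assumes "u \<le> v" "continuous_on {u..v} F"
    and deriv: "\<And>t. u < t \<Longrightarrow> t < v \<Longrightarrow> (F has_real_derivative (t - c) * g t) (at t)"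
  shows "c \<le> u \<Longrightarrow> ((\<lambda>t. \<bar>t - c\<bar> * g t) has_integral (F v - F u)) {u..v}"
    and "v \<le> c \<Longrightarrow> ((\<lambda>t. \<bar>t - c\<bar> * g t) has_integral (F u - F v)) {u..v}"
    and "u \<le> c \<Longrightarrow> c \<le> v \<Longrightarrow>
           ((\<lambda>t. \<bar>t - c\<bar> * g t) has_integral (F u + F v - 2 * F c)) {u..v}"
proof -
  have signed: "((\<lambda>t. (t - c) * g t) has_integral (F y - F x)) {x..y}"
    if "u \<le> x" "x \<le> y" "y \<le> v" for x y
    using that assms
    by (intro fundamental_theorem_of_calculus_interior)
       (auto intro: continuous_on_subset simp: has_real_derivative_iff_has_vector_derivative)
  have above: "((\<lambda>t. \<bar>t - c\<bar> * g t) has_integral (F y - F x)) {x..y}"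
    if "u \<le> x" "x \<le> y" "y \<le> v" "c \<le> x" for x y
    by (rule has_integral_eq[OF _ signed[OF that(1-3)]]) (use that in auto)
  have below: "((\<lambda>t. \<bar>t - c\<bar> * g t) has_integral (F x - F y)) {x..y}"
    if "u \<le> x" "x \<le> y" "y \<le> v" "y \<le> c" for x y
  proof -
    have "((\<lambda>t. - ((t - c) * g t)) has_integral (F x - F y)) {x..y}"
      using has_integral_neg[OF signed[OF that(1-3)]] by simp
    then show ?thesis
      by (rule has_integral_eq[rotated]) (use that in \<open>auto simp: algebra_simps\<close>)
  qed
  show "c \<le> u \<Longrightarrow> ((\<lambda>t. \<bar>t - c\<bar> * g t) has_integral (F v - F u)) {u..v}"
    using above assms(1) by blast
  show "v \<le> c \<Longrightarrow> ((\<lambda>t. \<bar>t - c\<bar> * g t) has_integral (F u - F v)) {u..v}"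
    using below assms(1) by blast
  show "((\<lambda>t. \<bar>t - c\<bar> * g t) has_integral (F u + F v - 2 * F c)) {u..v}"
    if "u \<le> c" "c \<le> v"
    using has_integral_combine[OF that below[of u c] above[of c v]] that
    by (simp add: algebra_simps)
qed

lemma mult_powr_plus_one: "0 \<le> (x::real) \<Longrightarrow> x * x powr (s + 1) = x powr (s + 2)"
  using powr_mult_base[of x "s + 1"] by (simp add: add_ac)

definition moment_primitive :: "real \<Rightarrow> real \<Rightarrow> real \<Rightarrow> real" where
  "moment_primitive s c t = t powr (s + 2) / (s + 2) - c * t powr (s + 1) / (s + 1)"

lemma has_real_derivative_moment_primitive:
  assumes "0 < t" "0 < s"
  shows "(moment_primitive s c has_real_derivative (t - c) * t powr s) (at t)"
proof -
  have "(moment_primitive s c has_real_derivative t powr (s + 1) - c * t powr s) (at t)"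
    unfolding moment_primitive_def[abs_def]
    using assms by (auto intro!: derivative_eq_intros simp: add_ac)
  then show ?thesis
    using powr_mult_base[of t s] assms by (simp add: algebra_simps add_ac)
qed

lemma has_integral_abs_sub_mult_powr:
  fixes u v c s :: real
  assumes "0 \<le> u" "u \<le> v" "0 < s"
  defines "P \<equiv> moment_primitive s c"
  shows "c \<le> u \<Longrightarrow> ((\<lambda>t. \<bar>t - c\<bar> * t powr s) has_integral (P v - P u)) {u..v}"
    and "v \<le> c \<Longrightarrow> ((\<lambda>t. \<bar>t - c\<bar> * t powr s) has_integral (P u - P v)) {u..v}"
    and "u \<le> c \<Longrightarrow> c \<le> v \<Longrightarrow>
           ((\<lambda>t. \<bar>t - c\<bar> * t powr s) has_integral (P u + P v - 2 * P c)) {u..v}"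
proof -
  have cont: "continuous_on {u..v} P"
    unfolding P_def moment_primitive_def[abs_def]
    using assms by (intro continuous_intros continuous_on_powr') auto
  have deriv: "(P has_real_derivative (t - c) * t powr s) (at t)" if "u < t" "t < v" for t
    unfolding P_def using has_real_derivative_moment_primitive that assms by simp
  note abs_integrals = has_integral_abs_sub_mult[OF assms(2) cont deriv]
  show "c \<le> u \<Longrightarrow> ((\<lambda>t. \<bar>t - c\<bar> * t powr s) has_integral (P v - P u)) {u..v}"
    and "v \<le> c \<Longrightarrow> ((\<lambda>t. \<bar>t - c\<bar> * t powr s) has_integral (P u - P v)) {u..v}"
    and "u \<le> c \<Longrightarrow> c \<le> v \<Longrightarrow>
           ((\<lambda>t. \<bar>t - c\<bar> * t powr s) has_integral (P u + P v - 2 * P c)) {u..v}"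
    using abs_integrals by auto
qed

lemma abs_moments_centre_inside:
  fixes \<alpha> l s :: real
  assumes "0 \<le> \<alpha>" "0 \<le> l" "0 < s" "\<alpha> * l \<le> 1 - \<alpha>"
  shows "((\<lambda>t. \<bar>t - \<alpha> * l\<bar>) has_integral gam2 \<alpha> l) {0..1 - \<alpha>}"
    and "((\<lambda>t. \<bar>t - \<alpha> * l\<bar> * t powr s) has_integral c1 \<alpha> l s) {0..1 - \<alpha>}"
    and "((\<lambda>t. \<bar>t - \<alpha> * l\<bar> * (1 - t) powr s) has_integral c2 \<alpha> l s) {0..1 - \<alpha>}"
proof -
  define c where "c = \<alpha> * l"
  have c: "0 \<le> c" "c \<le> 1 - \<alpha>" using assms by (simp_all add: c_def)
  have s: "s + 1 \<noteq> 0" "s + 2 \<noteq> 0" using assms by simp_all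
  have "((\<lambda>t. \<bar>t - c\<bar> * 1) has_integral
         ((0 - c)^2/2 + (1 - \<alpha> - c)^2/2 - 2 * ((c - c)^2/2))) {0..1 - \<alpha>}"
    by (rule has_integral_abs_sub_mult(3))
       (use c in \<open>auto intro!: derivative_eq_intros continuous_intros\<close>)
  moreover have "(0 - c)^2/2 + (1 - \<alpha> - c)^2/2 - 2 * ((c - c)^2/2) = gam2 \<alpha> l"
    by (simp add: c_def gam2_def gam1_def power2_eq_square field_simps)
  ultimately show "((\<lambda>t. \<bar>t - \<alpha> * l\<bar>) has_integral gam2 \<alpha> l) {0..1 - \<alpha>}"
    by (simp add: c_def)
  have "moment_primitive s c 0 + moment_primitive s c (1 - \<alpha>) - 2 * moment_primitive s c c
      = c1 \<alpha> l s"
    using mult_powr_plus_one[of c s] c s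
    unfolding moment_primitive_def c1_def c_def[symmetric]
    by (simp add: divide_simps) (simp add: algebra_simps)
  then show "((\<lambda>t. \<bar>t - \<alpha> * l\<bar> * t powr s) has_integral c1 \<alpha> l s) {0..1 - \<alpha>}"
    using has_integral_abs_sub_mult_powr(3)[of 0 "1 - \<alpha>" s c] c assms by (simp add: c_def)
  have "moment_primitive s (1 - c) \<alpha> + moment_primitive s (1 - c) 1
      - 2 * moment_primitive s (1 - c) (1 - c) = c2 \<alpha> l s"
    using mult_powr_plus_one[of "1 - c" s] mult_powr_plus_one[of \<alpha> s] c s assms
    unfolding moment_primitive_def c2_def c_def[symmetric]
    by (simp add: divide_simps) (simp add: algebra_simps)
  then have "((\<lambda>t. \<bar>t - (1 - c)\<bar> * t powr s) has_integral c2 \<alpha> l s) {\<alpha>..1}"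
    using has_integral_abs_sub_mult_powr(3)[of \<alpha> 1 s "1 - c"] c assms by simp
  from has_integral_reflect_one_minus[OF this]
  show "((\<lambda>t. \<bar>t - \<alpha> * l\<bar> * (1 - t) powr s) has_integral c2 \<alpha> l s) {0..1 - \<alpha>}"
    by (simp add: c_def abs_minus_commute)
qed

lemma abs_moments_centre_right:
  fixes \<alpha> l s :: real
  assumes "0 \<le> \<alpha>" "\<alpha> \<le> 1" "0 < s" "1 - \<alpha> \<le> \<alpha> * l"
  shows "((\<lambda>t. \<bar>t - \<alpha> * l\<bar>) has_integral gam1 \<alpha> l) {0..1 - \<alpha>}"
    and "((\<lambda>t. \<bar>t - \<alpha> * l\<bar> * t powr s) has_integral c3 \<alpha> l s) {0..1 - \<alpha>}"
    and "((\<lambda>t. \<bar>t - \<alpha> * l\<bar> * (1 - t) powr s) has_integral c4 \<alpha> l s) {0..1 - \<alpha>}"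
proof -
  define c where "c = \<alpha> * l"
  have c: "1 - \<alpha> \<le> c" using assms by (simp add: c_def)
  have s: "s + 1 \<noteq> 0" "s + 2 \<noteq> 0" using assms by simp_all
  have "((\<lambda>t. \<bar>t - c\<bar> * 1) has_integral ((0 - c)^2/2 - (1 - \<alpha> - c)^2/2)) {0..1 - \<alpha>}"
    by (rule has_integral_abs_sub_mult(2))
       (use c assms in \<open>auto intro!: derivative_eq_intros continuous_intros\<close>)
  moreover have "(0 - c)^2/2 - (1 - \<alpha> - c)^2/2 = gam1 \<alpha> l"
    by (simp add: c_def gam1_def power2_eq_square field_simps)
  ultimately show "((\<lambda>t. \<bar>t - \<alpha> * l\<bar>) has_integral gam1 \<alpha> l) {0..1 - \<alpha>}"
    by (simp add: c_def)
  have "moment_primitive s c 0 - moment_primitive s c (1 - \<alpha>) = c3 \<alpha> l s"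
    using s unfolding moment_primitive_def c3_def c_def[symmetric] by (simp add: divide_simps)
  then show "((\<lambda>t. \<bar>t - \<alpha> * l\<bar> * t powr s) has_integral c3 \<alpha> l s) {0..1 - \<alpha>}"
    using has_integral_abs_sub_mult_powr(2)[of 0 "1 - \<alpha>" s c] c assms by (simp add: c_def)
  have "moment_primitive s (1 - c) 1 - moment_primitive s (1 - c) \<alpha> = c4 \<alpha> l s"
    using s unfolding moment_primitive_def c4_def c_def[symmetric]
    by (simp add: divide_simps) (simp add: algebra_simps)
  then have "((\<lambda>t. \<bar>t - (1 - c)\<bar> * t powr s) has_integral c4 \<alpha> l s) {\<alpha>..1}"
    using has_integral_abs_sub_mult_powr(1)[of \<alpha> 1 s "1 - c"] c assms by simp
  from has_integral_reflect_one_minus[OF this]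
  show "((\<lambda>t. \<bar>t - \<alpha> * l\<bar> * (1 - t) powr s) has_integral c4 \<alpha> l s) {0..1 - \<alpha>}"
    by (simp add: c_def abs_minus_commute)
qed

definition kernel_integrand :: "real \<Rightarrow> real \<Rightarrow> real \<Rightarrow> real \<Rightarrow> real \<Rightarrow> real" where
  "kernel_integrand s a b c t = (t - c) * ((s + 1) * (t * b + (1 - t) * a) powr s)"

lemma has_integral_kernel_integrand:
  fixes a b c s u v :: real
  assumes "0 \<le> u" "u \<le> v" "v \<le> 1" "0 < s" "0 < a" "a < b"
  defines "x \<equiv> \<lambda>t. t * b + (1 - t) * a"
  shows "(kernel_integrand s a b c has_integral
           ((v - c) * x v powr (s + 1) - (u - c) * x u powr (s + 1)) / (b - a)
           - (x v powr (s + 2) - x u powr (s + 2)) / ((s + 2) * (b - a)\<^sup>2)) {u..v}"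
proof -
  define F where "F t = (t - c) * x t powr (s + 1) / (b - a) - x t powr (s + 2) / ((s + 2) * (b - a)\<^sup>2)"
    for t
  have x_pos: "0 < x t" if "0 \<le> t" "t \<le> 1" for t
  proof -
    have "0 \<le> (b - a) * t" using that assms by simp
    then show ?thesis using assms by (simp add: x_def algebra_simps)
  qed
  have "\<forall>t\<in>{u..v}. x t \<noteq> 0"
    using x_pos assms by (metis atLeastAtMost_iff less_irrefl order_trans)
  then have cont_powr: "continuous_on {u..v} (\<lambda>t. x t powr e)" for e
    by (intro continuous_on_powr continuous_on_const) (auto simp: x_def intro!: continuous_intros)
  have "continuous_on {u..v} F"
    unfolding F_def using assms
    by (intro continuous_on_diff continuous_on_divide continuous_on_mult cont_powr
        continuous_on_const continuous_on_id) auto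
  moreover have "(F has_real_derivative kernel_integrand s a b c t) (at t)" if "u < t" "t < v" for t
  proof -
    have xt: "0 < x t" using x_pos that assms by simp
    have dx: "(x has_real_derivative b - a) (at t)"
      unfolding x_def by (auto intro!: derivative_eq_intros simp: algebra_simps)
    have dpow: "((\<lambda>t. x t powr (e + 1)) has_real_derivative (e + 1) * x t powr e * (b - a)) (at t)"
      for e
      using DERIV_chain2[OF has_real_derivative_powr[of "x t" "e + 1"] dx] xt by simp
    have "((\<lambda>t. (t - c) * x t powr (s + 1)) has_real_derivative
           x t powr (s + 1) + (t - c) * ((s + 1) * x t powr s * (b - a))) (at t)"
      using DERIV_mult[OF DERIV_diff[OF DERIV_ident DERIV_const] dpow[of s], of c]
      by (simp add: algebra_simps)
    then have "(F has_real_derivative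
           (x t powr (s + 1) + (t - c) * ((s + 1) * x t powr s * (b - a))) / (b - a)
           - (s + 1 + 1) * x t powr (s + 1) * (b - a) / ((s + 2) * (b - a)\<^sup>2)) (at t)"
      unfolding F_def[abs_def] using dpow[of "s + 1"]
      by (intro DERIV_diff DERIV_cdivide) (simp_all add: add_ac)
    moreover have "(s + 1 + 1) * x t powr (s + 1) * (b - a) / ((s + 2) * (b - a)\<^sup>2)
        = x t powr (s + 1) / (b - a)"
      using assms by (simp add: power2_eq_square add.commute)
    ultimately show ?thesis
      using assms by (simp add: kernel_integrand_def x_def add_divide_distrib)
  qed
  ultimately have "(kernel_integrand s a b c has_integral (F v - F u)) {u..v}"
    using assms(2)
    by (intro fundamental_theorem_of_calculus_interior)
       (auto simp: has_real_derivative_iff_has_vector_derivative)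
  then show ?thesis
    by (rule has_integral_eq_rhs) (simp add: F_def diff_divide_distrib)
qed

lemma abs_integral_kernel_integrand_le:
  fixes a b q s u v c W B A :: real
  assumes ab: "0 < a" "a < b" and q: "1 \<le> q" and s: "0 < s" "s * q \<le> 1"
    and uv: "0 \<le> u" "u \<le> v" "v \<le> 1"
    and int_W: "((\<lambda>t. \<bar>t - c\<bar>) has_integral W) {u..v}"
    and int_B: "((\<lambda>t. \<bar>t - c\<bar> * t powr s) has_integral B) {u..v}"
    and int_A: "((\<lambda>t. \<bar>t - c\<bar> * (1 - t) powr s) has_integral A) {u..v}"
  shows "\<bar>integral {u..v} (kernel_integrand s a b c)\<bar>
         \<le> (s + 1) * (rpow W (1 - 1/q) * (B * b powr (s * q) + A * a powr (s * q)) powr (1/q))"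
proof -
  define x where "x t = t * b + (1 - t) * a" for t
  define \<phi> where "\<phi> t = (s + 1) * x t powr s" for t
  define h where "h t = t powr s * b powr (s * q) + (1 - t) powr s * a powr (s * q)" for t
  define X where "X = B * b powr (s * q) + A * a powr (s * q)"
  have x: "a \<le> x t" "x t \<le> b" if "t \<in> {u..v}" for t
  proof -
    have "0 \<le> (b - a) * t" "0 \<le> (b - a) * (1 - t)" using that uv ab by auto
    then show "a \<le> x t" "x t \<le> b" by (simp_all add: x_def algebra_simps)
  qed
  have \<phi>_pos: "0 < \<phi> t" if "t \<in> {u..v}" for t
    using x[OF that] ab s by (simp add: \<phi>_def)
  have \<phi>_le: "\<phi> t \<le> (s + 1) * b powr s" if "t \<in> {u..v}" for t
    using x[OF that] ab s by (simp add: \<phi>_def powr_mono2)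
  have x_h: "a powr (s * q) \<le> x t powr (s * q)" "x t powr (s * q) \<le> h t" if "t \<in> {u..v}" for t
  proof -
    show "a powr (s * q) \<le> x t powr (s * q)" using x[OF that] ab s q by (simp add: powr_mono2)
    have "s \<le> s * q" using s q by simp
    then show "x t powr (s * q) \<le> h t"
      unfolding x_def h_def using that uv ab s by (intro powr_convex_comb_le) auto
  qed
  have \<phi>_powr: "\<phi> t powr q \<le> (s + 1) powr q * h t" if "t \<in> {u..v}" for t
  proof -
    have "\<phi> t powr q = (s + 1) powr q * x t powr (s * q)"
      using x[OF that] ab s by (simp add: \<phi>_def powr_mult powr_powr)
    then show ?thesis using x_h(2)[OF that] s by (simp add: mult_left_mono)
  qed
  have "continuous_on {u..v} x"
    unfolding x_def by (intro continuous_intros)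
  moreover have "\<forall>t\<in>{u..v}. 0 \<le> x t"
    using x ab by (meson less_le_trans less_imp_le)
  ultimately have "continuous_on {u..v} (\<lambda>t. \<bar>t - c\<bar> * \<phi> t)"
    unfolding \<phi>_def using s by (intro continuous_intros continuous_on_powr') auto
  then have int_\<phi>: "((\<lambda>t. \<bar>t - c\<bar> * \<phi> t) has_integral J) {u..v}"
    if "J = integral {u..v} (\<lambda>t. \<bar>t - c\<bar> * \<phi> t)" for J
    using that integrable_continuous_interval by blast
  have "\<bar>integral {u..v} (kernel_integrand s a b c)\<bar> = norm (integral {u..v} (kernel_integrand s a b c))"
    by simp
  also have "\<dots> \<le> integral {u..v} (\<lambda>t. \<bar>t - c\<bar> * \<phi> t)"
  proof (rule integral_norm_bound_integral)
    show "kernel_integrand s a b c integrable_on {u..v}"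
      using has_integral_kernel_integrand[OF uv s(1) ab] by blast
    show "(\<lambda>t. \<bar>t - c\<bar> * \<phi> t) integrable_on {u..v}"
      using int_\<phi>[OF refl] by blast
    show "norm (kernel_integrand s a b c t) \<le> \<bar>t - c\<bar> * \<phi> t" if "t \<in> {u..v}" for t
      using \<phi>_pos[OF that] s by (simp add: kernel_integrand_def \<phi>_def x_def abs_mult)
  qed
  also have "\<dots> \<le> (s + 1) * (rpow W (1 - 1/q) * X powr (1/q))"
  proof (cases "W = 0")
    case True
    have "integral {u..v} (\<lambda>t. \<bar>t - c\<bar> * \<phi> t) \<le> W * ((s + 1) * b powr s)"
      by (rule has_integral_le[OF int_\<phi>[OF refl] has_integral_mult_left[OF int_W]])
         (simp add: \<phi>_le mult_left_mono)
    moreover have "0 \<le> (s + 1) * (rpow W (1 - 1/q) * X powr (1/q))"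
      using s by (simp add: rpow_def)
    ultimately show ?thesis using True by simp
  next
    case False
    have "0 \<le> W" using int_W by (rule has_integral_nonneg) simp
    with False have W: "0 < W" by simp
    have "((\<lambda>t. \<bar>t - c\<bar> * t powr s * b powr (s * q) + \<bar>t - c\<bar> * (1 - t) powr s * a powr (s * q))
           has_integral X) {u..v}"
      unfolding X_def by (intro has_integral_add has_integral_mult_left int_B int_A)
    then have int_h: "((\<lambda>t. \<bar>t - c\<bar> * h t) has_integral X) {u..v}"
      by (rule has_integral_eq[rotated]) (simp add: h_def algebra_simps)
    have "W * a powr (s * q) \<le> X"
      by (rule has_integral_le[OF has_integral_mult_left[OF int_W] int_h])
         (use x_h in \<open>force intro: mult_left_mono\<close>)
    then have X: "0 < X" using W ab by (smt (verit) mult_pos_pos powr_gt_zero)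
    have "integral {u..v} (\<lambda>t. \<bar>t - c\<bar> * \<phi> t)
          \<le> W powr (1 - 1/q) * ((s + 1) powr q * X) powr (1/q)"
    proof (rule weighted_power_mean_has_integral[OF q W _ int_W int_\<phi>[OF refl]])
      show "((\<lambda>t. \<bar>t - c\<bar> * ((s + 1) powr q * h t)) has_integral (s + 1) powr q * X) {u..v}"
        using has_integral_mult_right[OF int_h, of "(s + 1) powr q"] by (simp add: mult.left_commute)
    qed (use X s \<phi>_pos \<phi>_powr in auto)
    also have "((s + 1) powr q * X) powr (1/q) = (s + 1) * X powr (1/q)"
      using s q X by (simp add: powr_mult powr_powr)
    finally show ?thesis using W by (simp add: rpow_def algebra_simps)
  qed
  finally show ?thesis unfolding X_def .
qed

lemma abs_integral_left_kernel_le: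
  fixes a b q s \<alpha> l :: real
  assumes "0 < a" "a < b" "1 \<le> q" "0 < s" "s * q \<le> 1" "0 \<le> \<alpha>" "\<alpha> \<le> 1" "0 \<le> l"
  defines "I \<equiv> \<bar>integral {0..1 - \<alpha>} (kernel_integrand s a b (\<alpha> * l))\<bar>"
  shows "\<alpha> * l \<le> 1 - \<alpha> \<Longrightarrow> I \<le> (s + 1) * (rpow (gam2 \<alpha> l) (1 - 1/q) *
           (c1 \<alpha> l s * b powr (s * q) + c2 \<alpha> l s * a powr (s * q)) powr (1/q))"
    and "1 - \<alpha> \<le> \<alpha> * l \<Longrightarrow> I \<le> (s + 1) * (rpow (gam1 \<alpha> l) (1 - 1/q) *
           (c3 \<alpha> l s * b powr (s * q) + c4 \<alpha> l s * a powr (s * q)) powr (1/q))"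
proof -
  have interval: "0 \<le> (0::real)" "0 \<le> 1 - \<alpha>" "1 - \<alpha> \<le> 1" using assms by simp_all
  show "I \<le> (s + 1) * (rpow (gam2 \<alpha> l) (1 - 1/q) *
           (c1 \<alpha> l s * b powr (s * q) + c2 \<alpha> l s * a powr (s * q)) powr (1/q))"
    if "\<alpha> * l \<le> 1 - \<alpha>"
    using abs_integral_kernel_integrand_le[OF assms(1-5) interval
        abs_moments_centre_inside[OF assms(6,8,4) that]]
    unfolding I_def .
  show "I \<le> (s + 1) * (rpow (gam1 \<alpha> l) (1 - 1/q) *
           (c3 \<alpha> l s * b powr (s * q) + c4 \<alpha> l s * a powr (s * q)) powr (1/q))"
    if "1 - \<alpha> \<le> \<alpha> * l"
    using abs_integral_kernel_integrand_le[OF assms(1-5) interval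
        abs_moments_centre_right[OF assms(6,7,4) that]]
    unfolding I_def .
qed

lemma abs_integral_right_kernel_le:
  fixes a b q s \<alpha> l :: real
  assumes "0 < a" "a < b" "1 \<le> q" "0 < s" "s * q \<le> 1" "0 \<le> \<alpha>" "\<alpha> \<le> 1" "0 \<le> l"
  defines "I \<equiv> \<bar>integral {1 - \<alpha>..1} (kernel_integrand s a b (1 - (1 - \<alpha>) * l))\<bar>"
  shows "1 - \<alpha> \<le> 1 - (1 - \<alpha>) * l \<Longrightarrow> I \<le> (s + 1) * (rpow (gam2 (1 - \<alpha>) l) (1 - 1/q) *
           (c2 (1 - \<alpha>) l s * b powr (s * q) + c1 (1 - \<alpha>) l s * a powr (s * q)) powr (1/q))"
    and "1 - (1 - \<alpha>) * l \<le> 1 - \<alpha> \<Longrightarrow> I \<le> (s + 1) * (rpow (gam1 (1 - \<alpha>) l) (1 - 1/q) *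
           (c4 (1 - \<alpha>) l s * b powr (s * q) + c3 (1 - \<alpha>) l s * a powr (s * q)) powr (1/q))"
proof -
  have interval: "0 \<le> 1 - \<alpha>" "1 - \<alpha> \<le> 1" "1 \<le> (1::real)" using assms by simp_all
  have \<alpha>': "0 \<le> 1 - \<alpha>" "1 - \<alpha> \<le> 1" using assms by simp_all
  \<comment> \<open>The right interval is the mirror image of the left one for \<open>1 - \<alpha>\<close>.\<close>
  have mirror: "((\<lambda>t. \<bar>t - (1 - (1 - \<alpha>) * l)\<bar> * g (1 - t)) has_integral M) {1 - \<alpha>..1}"
    if "((\<lambda>t. \<bar>t - (1 - \<alpha>) * l\<bar> * g t) has_integral M) {0..1 - (1 - \<alpha>)}" for g M
  proof -
    have "\<bar>1 - t - (1 - \<alpha>) * l\<bar> = \<bar>t - (1 - (1 - \<alpha>) * l)\<bar>" for t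
      by (simp add: abs_minus_commute algebra_simps)
    then show ?thesis using has_integral_reflect_one_minus[OF that] by simp
  qed
  show "I \<le> (s + 1) * (rpow (gam2 (1 - \<alpha>) l) (1 - 1/q) *
           (c2 (1 - \<alpha>) l s * b powr (s * q) + c1 (1 - \<alpha>) l s * a powr (s * q)) powr (1/q))"
    if "1 - \<alpha> \<le> 1 - (1 - \<alpha>) * l"
  proof -
    have "(1 - \<alpha>) * l \<le> 1 - (1 - \<alpha>)" using that by simp
    note moments = abs_moments_centre_inside[OF \<alpha>'(1) assms(8,4) this]
    have "((\<lambda>t. \<bar>t - (1 - (1 - \<alpha>) * l)\<bar>) has_integral gam2 (1 - \<alpha>) l) {1 - \<alpha>..1}"
      using mirror[of "\<lambda>_. 1"] moments(1) by simp
    moreover have "((\<lambda>t. \<bar>t - (1 - (1 - \<alpha>) * l)\<bar> * t powr s) has_integral c2 (1 - \<alpha>) l s) {1 - \<alpha>..1}"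
      using mirror[of "\<lambda>t. (1 - t) powr s"] moments(3) by simp
    moreover have "((\<lambda>t. \<bar>t - (1 - (1 - \<alpha>) * l)\<bar> * (1 - t) powr s) has_integral c1 (1 - \<alpha>) l s)
        {1 - \<alpha>..1}"
      using mirror[of "\<lambda>t. t powr s"] moments(2) by simp
    ultimately show ?thesis
      unfolding I_def by (rule abs_integral_kernel_integrand_le[OF assms(1-5) interval])
  qed
  show "I \<le> (s + 1) * (rpow (gam1 (1 - \<alpha>) l) (1 - 1/q) *
           (c4 (1 - \<alpha>) l s * b powr (s * q) + c3 (1 - \<alpha>) l s * a powr (s * q)) powr (1/q))"
    if "1 - (1 - \<alpha>) * l \<le> 1 - \<alpha>"
  proof -
    have "1 - (1 - \<alpha>) \<le> (1 - \<alpha>) * l" using that by simp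
    note moments = abs_moments_centre_right[OF \<alpha>' assms(4) this]
    have "((\<lambda>t. \<bar>t - (1 - (1 - \<alpha>) * l)\<bar>) has_integral gam1 (1 - \<alpha>) l) {1 - \<alpha>..1}"
      using mirror[of "\<lambda>_. 1"] moments(1) by simp
    moreover have "((\<lambda>t. \<bar>t - (1 - (1 - \<alpha>) * l)\<bar> * t powr s) has_integral c4 (1 - \<alpha>) l s) {1 - \<alpha>..1}"
      using mirror[of "\<lambda>t. (1 - t) powr s"] moments(3) by simp
    moreover have "((\<lambda>t. \<bar>t - (1 - (1 - \<alpha>) * l)\<bar> * (1 - t) powr s) has_integral c3 (1 - \<alpha>) l s)
        {1 - \<alpha>..1}"
      using mirror[of "\<lambda>t. t powr s"] moments(2) by simp
    ultimately show ?thesis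
      unfolding I_def by (rule abs_integral_kernel_integrand_le[OF assms(1-5) interval])
  qed
qed

lemma plog_mean_powr_eq:
  assumes "0 < a" "a < b" "0 < s"
  shows "plog_mean (s + 1) a b powr (s + 1) = (b powr (s + 2) - a powr (s + 2)) / ((s + 2) * (b - a))"
proof -
  have pos: "0 < (b powr (s + 2) - a powr (s + 2)) / ((s + 2) * (b - a))"
    using assms by (intro divide_pos_pos) (auto intro!: powr_less_mono2)
  have exponents: "s + 1 + 1 = s + 2" "1 / (s + 1) * (s + 1) = 1" using assms by simp_all
  show ?thesis
    unfolding plog_mean_def exponents powr_powr using powr_one[OF less_imp_le[OF pos]] .
qed

lemma mean_difference_eq_kernel_integrals:
  fixes a b s \<alpha> l :: real
  assumes "0 < a" "a < b" "0 < s" "0 \<le> \<alpha>" "\<alpha> \<le> 1"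
  shows "l * wam \<alpha> (a powr (s + 1)) (b powr (s + 1)) + (1 - l) * wam \<alpha> a b powr (s + 1)
           - plog_mean (s + 1) a b powr (s + 1)
         = (b - a) * (integral {0..1 - \<alpha>} (kernel_integrand s a b (\<alpha> * l))
                      + integral {1 - \<alpha>..1} (kernel_integrand s a b (1 - (1 - \<alpha>) * l)))"
proof -
  define w where "w = wam \<alpha> a b"
  have w: "(1 - \<alpha>) * b + (1 - (1 - \<alpha>)) * a = w" by (simp add: w_def wam_def)
  have I1: "integral {0..1 - \<alpha>} (kernel_integrand s a b (\<alpha> * l))
        = ((1 - \<alpha> - \<alpha> * l) * w powr (s + 1) + \<alpha> * l * a powr (s + 1)) / (b - a)
          - (w powr (s + 2) - a powr (s + 2)) / ((s + 2) * (b - a)\<^sup>2)"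
    using integral_unique[OF has_integral_kernel_integrand[of 0 "1 - \<alpha>" s a b "\<alpha> * l"]] assms
    unfolding w by simp
  have I2: "integral {1 - \<alpha>..1} (kernel_integrand s a b (1 - (1 - \<alpha>) * l))
        = ((1 - \<alpha>) * l * b powr (s + 1) - (1 - \<alpha> - (1 - (1 - \<alpha>) * l)) * w powr (s + 1)) / (b - a)
          - (b powr (s + 2) - w powr (s + 2)) / ((s + 2) * (b - a)\<^sup>2)"
    using integral_unique[OF has_integral_kernel_integrand[of "1 - \<alpha>" 1 s a b "1 - (1 - \<alpha>) * l"]] assms
    unfolding w by simp
  have "b - a \<noteq> 0" using assms by simp
  then have scale: "(b - a) * (X / (b - a) - Y / ((s + 2) * (b - a)\<^sup>2)) = X - Y / ((s + 2) * (b - a))"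
    for X Y by (simp add: power2_eq_square divide_simps)
  show ?thesis
    unfolding I1 I2 distrib_left scale plog_mean_powr_eq[OF assms(1-3)] w_def[symmetric]
    unfolding wam_def by (simp add: diff_divide_distrib algebra_simps)
qed

theorem mainTheorem7:
  fixes a b q s \<alpha> l :: real
  assumes "0 < a" and "a < b" and "1 \<le> q" and "0 < s" and "s < 1 / q"
    and "0 \<le> \<alpha>" and "\<alpha> \<le> 1" and "0 \<le> l" and "l \<le> 1"
  defines "\<Delta> \<equiv> \<bar>l * wam \<alpha> (a powr (s + 1)) (b powr (s + 1))
                    + (1 - l) * (wam \<alpha> a b) powr (s + 1)
                    - (plog_mean (s + 1) a b) powr (s + 1)\<bar>"
  shows
    "(\<alpha> * l \<le> 1 - \<alpha> \<and> 1 - \<alpha> \<le> 1 - l * (1 - \<alpha>) \<longrightarrow>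
       \<Delta> \<le> (b - a) * (s + 1) *
         (rpow (gam2 \<alpha> l) (1 - 1 / q) *
            (c1 \<alpha> l s * b powr (s * q) + c2 \<alpha> l s * a powr (s * q)) powr (1 / q)
          + rpow (gam2 (1 - \<alpha>) l) (1 - 1 / q) *
            (c2 (1 - \<alpha>) l s * b powr (s * q) + c1 (1 - \<alpha>) l s * a powr (s * q)) powr (1 / q)))
     \<and> (\<alpha> * l \<le> 1 - l * (1 - \<alpha>) \<and> 1 - l * (1 - \<alpha>) \<le> 1 - \<alpha> \<longrightarrow>
       \<Delta> \<le> (b - a) * (s + 1) *
         (rpow (gam2 \<alpha> l) (1 - 1 / q) *
            (c1 \<alpha> l s * b powr (s * q) + c2 \<alpha> l s * a powr (s * q)) powr (1 / q)
          + rpow (gam1 (1 - \<alpha>) l) (1 - 1 / q) *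
            (c4 (1 - \<alpha>) l s * b powr (s * q) + c3 (1 - \<alpha>) l s * a powr (s * q)) powr (1 / q)))
     \<and> (1 - \<alpha> \<le> \<alpha> * l \<and> \<alpha> * l \<le> 1 - l * (1 - \<alpha>) \<longrightarrow>
       \<Delta> \<le> (b - a) * (s + 1) *
         (rpow (gam1 \<alpha> l) (1 - 1 / q) *
            (c3 \<alpha> l s * b powr (s * q) + c4 \<alpha> l s * a powr (s * q)) powr (1 / q)
          + rpow (gam2 (1 - \<alpha>) l) (1 - 1 / q) *
            (c2 (1 - \<alpha>) l s * b powr (s * q) + c1 (1 - \<alpha>) l s * a powr (s * q)) powr (1 / q)))"
proof -
  have sq: "s * q \<le> 1" using assms(3,5) by (simp add: field_simps)
  define I1 where "I1 = integral {0..1 - \<alpha>} (kernel_integrand s a b (\<alpha> * l))"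
  define I2 where "I2 = integral {1 - \<alpha>..1} (kernel_integrand s a b (1 - (1 - \<alpha>) * l))"
  have "\<Delta> = (b - a) * \<bar>I1 + I2\<bar>"
    unfolding \<Delta>_def I1_def I2_def mean_difference_eq_kernel_integrals[OF assms(1,2,4,6,7)]
    using assms(2) by (simp add: abs_mult)
  also have "\<dots> \<le> (b - a) * (\<bar>I1\<bar> + \<bar>I2\<bar>)"
    using assms(2) by (intro mult_left_mono abs_triangle_ineq) simp
  finally have \<Delta>_le: "\<Delta> \<le> (b - a) * (\<bar>I1\<bar> + \<bar>I2\<bar>)" .
  have combine: "\<Delta> \<le> (b - a) * (s + 1) * (R1 + R2)"
    if "\<bar>I1\<bar> \<le> (s + 1) * R1" "\<bar>I2\<bar> \<le> (s + 1) * R2" for R1 R2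
    using \<Delta>_le assms(2) mult_left_mono[OF add_mono[OF that], of "b - a"]
    by (simp add: algebra_simps)
  note left = abs_integral_left_kernel_le[OF assms(1-4) sq assms(6-8), folded I1_def]
  note right = abs_integral_right_kernel_le[OF assms(1-4) sq assms(6-8), folded I2_def]
  show ?thesis
    using combine[OF left(1) right(1)] combine[OF left(1) right(2)] combine[OF left(2) right(1)]
    by (simp add: mult.commute)
qed

end
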